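(* There exists a centred weakly stationary sequence $X_1,X_2,\ldots$ with finite second moments such that $\operatorname{Var}(S_{2^r})/2^r$ converges (to a limit in $(0,\infty)$) as $r\to\infty$, but $\operatorname{Var}(S_n)/n$ does not converge as $n\to\infty$.
   Context: $S_n=X_1+\cdots+X_n$. *)

theory Defs
  imports "HOL-Probability.Probability"
begin

definition partial_sum :: "(nat \<Rightarrow> 'a \<Rightarrow> real) \<Rightarrow> nat \<Rightarrow> 'a \<Rightarrow> real" where
  "partial_sum X n = (\<lambda>\<omega>. \<Sum>i=1..n. X i \<omega>)"

definition centred_weakly_stationary :: "'a measure \<Rightarrow> (nat \<Rightarrow> 'a \<Rightarrow> real) \<Rightarrow> bool" where
  "centred_weakly_stationary M X \<longleftrightarrow>
     (\<forall>i\<ge>1. X i \<in> borel_measurable M) \<and>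
     (\<forall>i\<ge>1. integrable M (\<lambda>\<omega>. (X i \<omega>)^2)) \<and>
     (\<forall>i\<ge>1. prob_space.expectation M (X i) = 0) \<and>
     (\<forall>i\<ge>1. \<forall>j\<ge>1. \<forall>k. prob_space.expectation M (\<lambda>\<omega>. X i \<omega> * X j \<omega>)
                        = prob_space.expectation M (\<lambda>\<omega>. X (i+k) \<omega> * X (j+k) \<omega>))"

end

theory Submission
  imports Defs "HOL-Real_Asymp.Real_Asymp"
begin

(* The counterexample is a random triangle wave.  For P = 2^(k+1) let tri P be the
   P-periodic triangle wave on the integers (0 at multiples of P, peak P/2 in between).
   Pick k with probability 2^-(k+1) and an independent uniform phase phi < P, and let
   X_i = tri P (phi + i) - tri P (phi + i - 1) be the increments, so that
   S_n = tri P (phi + n) - tri P phi.  A uniform phase makes each mixture component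
   stationary and centred (sums over a full period are shift invariant), hence so is
   the mixture.  The variance of S_n is a series whose k-th term is 2^-(k+1) times the
   mean squared n-step increment of the wave; that increment energy has a closed form
   for n <= P/2 and vanishes when P divides n.  Summing the series exactly gives
     Var S_(2^r)   = 5/9 * 2^r + 4/9 * 2^-r   and
     Var S_(3*2^r) = 11/6 * 2^r + 1/2 * 2^-r,
   so Var S_n / n tends to 5/9 along 2^r but to 11/18 along 3 * 2^r. *)

lemma expectation_bind_pmf_nat_sums:
  fixes p :: "nat pmf" and N :: "nat \<Rightarrow> 'a pmf" and f :: "'a \<Rightarrow> real"
  assumes bound: "\<And>x. x \<in> set_pmf (bind_pmf p N) \<Longrightarrow> \<bar>f x\<bar> \<le> B"
  shows "(\<lambda>k. pmf p k * measure_pmf.expectation (N k) f) sums measure_pmf.expectation (bind_pmf p N) f"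
proof -
  obtain x0 where "x0 \<in> set_pmf (bind_pmf p N)" using set_pmf_not_empty[of "bind_pmf p N"] by blast
  then have B0: "0 \<le> B" using bound by force
  define g where "g x = max (-B) (min B (f x))" for x
  have g_bound: "\<bar>g x\<bar> \<le> B" for x using B0 by (auto simp: g_def)
  have g_f: "g x = f x" if "x \<in> set_pmf (bind_pmf p N)" for x
    using bound[OF that] by (auto simp: g_def)
  define h where "h k = measure_pmf.expectation (N k) g" for k
  have h_bound: "\<bar>h k\<bar> \<le> B" for k
  proof -
    have int: "integrable (N k) g"
      by (rule measure_pmf.integrable_const_bound[where B=B]) (use g_bound in auto)
    have "-B \<le> g x" "g x \<le> B" for x using g_bound[of x] by linarith+
    then have "h k \<le> B" "-B \<le> h k"
      unfolding h_def
      by (auto intro!: measure_pmf.integral_le_const measure_pmf.integral_ge_const int)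
    then show ?thesis by linarith
  qed
  have "measure_pmf.expectation (bind_pmf p N) f = measure_pmf.expectation (bind_pmf p N) g"
    by (intro integral_cong_AE) (auto simp: AE_measure_pmf_iff g_f)
  also have "\<dots> = measure_pmf.expectation p h"
    unfolding measure_pmf_bind h_def
    by (rule integral_bind[where K="count_space UNIV" and B=B and B'=1])
       (use g_bound in \<open>auto intro: measure_pmf.finite_measure simp: measure_pmf_in_subprob_algebra\<close>)
  also have "\<dots> = (\<integral>k. pmf p k * h k \<partial>count_space UNIV)"
    unfolding measure_pmf_eq_density by (subst integral_density) auto
  finally have E: "measure_pmf.expectation (bind_pmf p N) f = (\<integral>k. pmf p k * h k \<partial>count_space UNIV)" .
  have "norm (pmf p k * h k) \<le> norm (B * pmf p k)" for k
    using mult_left_mono[OF h_bound[of k] pmf_nonneg[of p k]] B0 by (simp add: abs_mult mult.commute)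
  then have "integrable (count_space UNIV) (\<lambda>k. pmf p k * h k)"
    by (intro Bochner_Integration.integrable_bound[OF integrable_mult_right[OF integrable_pmf]]) auto
  then have "(\<lambda>k. pmf p k * h k) sums measure_pmf.expectation (bind_pmf p N) f"
    unfolding E by (rule sums_integral_count_space_nat)
  moreover have "pmf p k * h k = pmf p k * measure_pmf.expectation (N k) f" for k
  proof (cases "k \<in> set_pmf p")
    case True
    then have "measure_pmf.expectation (N k) g = measure_pmf.expectation (N k) f"
      by (intro integral_cong_AE) (auto simp: AE_measure_pmf_iff intro!: g_f simp: set_bind_pmf)
    then show ?thesis by (simp add: h_def)
  qed (simp add: set_pmf_eq)
  ultimately show ?thesis by simp
qed

lemma periodic_sum_shift:
  fixes G :: "nat \<Rightarrow> 'b::comm_monoid_add"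
  assumes periodic: "\<And>x. G (x mod P) = G x" and P: "P > 0"
  shows "(\<Sum>\<phi><P. G (\<phi> + c)) = (\<Sum>\<phi><P. G \<phi>)"
proof (induction c)
  case (Suc c)
  obtain p where p: "P = Suc p" using P by (cases P) auto
  define H where "H x = G (x + c)" for x
  have H_wrap: "H P = H 0" unfolding H_def using periodic[of "P + c"] periodic[of c] by simp
  have "(\<Sum>\<phi><P. G (\<phi> + Suc c)) = (\<Sum>\<phi><p. H (Suc \<phi>)) + H (Suc p)" by (simp add: H_def p)
  also have "\<dots> = H 0 + (\<Sum>\<phi><p. H (Suc \<phi>))" using H_wrap p by (simp add: add.commute)
  also have "\<dots> = (\<Sum>\<phi><Suc p. H \<phi>)" by (simp only: sum.lessThan_Suc_shift)
  finally show ?case using Suc by (simp add: H_def p)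
qed simp

definition tri :: "nat \<Rightarrow> nat \<Rightarrow> real" where
  "tri P x = min (real (x mod P)) (real P - real (x mod P))"

lemma tri_mod: "tri P (x mod P) = tri P x"
  by (simp add: tri_def)

lemma tri_add_period: "tri P (x + P) = tri P x"
  by (simp add: tri_def)

lemma tri_step: assumes "P > 0" shows "\<bar>tri P (Suc x) - tri P x\<bar> \<le> 1"
proof (cases "Suc (x mod P) = P")
  case True
  then have "Suc x mod P = 0" by (simp add: mod_Suc)
  then show ?thesis using True unfolding tri_def by (auto simp: min_def)
next
  case False
  then have "Suc x mod P = Suc (x mod P)" by (simp add: mod_Suc)
  then show ?thesis using False assms unfolding tri_def by (auto simp: min_def)
qed

lemma tri_increment_bound: assumes "P > 0" shows "\<bar>tri P (x + n) - tri P x\<bar> \<le> real n"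
proof (induction n)
  case (Suc n)
  have "\<bar>tri P (Suc (x + n)) - tri P (x + n)\<bar> \<le> 1" by (rule tri_step[OF assms])
  then show ?case using Suc by simp
qed simp

lemma tri_rising: "x \<le> H \<Longrightarrow> tri (2*H) x = real x"
  by (cases "H = 0") (auto simp: tri_def min_def)

lemma tri_falling: "H \<le> x \<Longrightarrow> x \<le> 2*H \<Longrightarrow> tri (2*H) x = real (2*H) - real x"
  by (cases "x = 2*H") (auto simp: tri_def min_def)

lemma tri_rising_again: "2*H \<le> x \<Longrightarrow> x \<le> 3*H \<Longrightarrow> tri (2*H) x = real x - real (2*H)"
  using tri_rising[of "x - 2*H" H] tri_add_period[of "2*H" "x - 2*H"] by simp

definition sq_incr :: "nat \<Rightarrow> nat \<Rightarrow> real" where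
  "sq_incr P n = (\<Sum>\<phi><P. (tri P (\<phi> + n) - tri P \<phi>)^2)"

lemma sq_incr_mod: "sq_incr P (n mod P) = sq_incr P n"
proof -
  have "tri P (\<phi> + n mod P) = tri P (\<phi> + n)" for \<phi>
    by (metis mod_add_right_eq tri_mod)
  then show ?thesis by (simp add: sq_incr_def)
qed

lemma sq_incr_reflect: assumes "n \<le> P" "P > 0" shows "sq_incr P (P - n) = sq_incr P n"
proof -
  define G where "G \<phi> = (tri P (\<phi> + (P - n)) - tri P \<phi>)^2" for \<phi>
  have periodic: "G (x mod P) = G x" for x
    by (metis G_def mod_add_left_eq tri_mod)
  have G_shift: "G (\<phi> + n) = (tri P (\<phi> + n) - tri P \<phi>)^2" for \<phi>
  proof -
    have "\<phi> + n + (P - n) = \<phi> + P" using assms by simp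
    then show ?thesis by (simp add: G_def tri_add_period power2_commute)
  qed
  have "sq_incr P (P - n) = (\<Sum>\<phi><P. G \<phi>)" by (simp add: sq_incr_def G_def)
  also have "\<dots> = (\<Sum>\<phi><P. G (\<phi> + n))" using periodic_sum_shift[of G P n, OF periodic assms(2)] by simp
  finally show ?thesis by (simp add: sq_incr_def G_shift)
qed

lemma sum_squares_arith_progression:
  "(\<Sum>t<m. (x + 2*real t)^2) = real m*x^2 + 2*x*real m*(real m-1) + 2/3*(real m-1)*real m*(2*real m-1)"
  by (induction m) (simp_all add: field_simps power2_eq_square)

(* Closed form of the increment energy for 1 \<le> n \<le> P/2.  The period splits into two
   blocks where both points lie on one slope (contributing n^2 each) and two blocks
   where the increment straddles a peak or a trough. *)
lemma sq_incr_formula: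
  assumes n1: "1 \<le> n" and nH: "n \<le> H"
  shows "sq_incr (2*H) n = 2*real H*(real n)^2 - 4/3*((real n)^3 - real n)"
proof -
  define F where "F \<phi> = (tri (2*H) (\<phi> + n) - tri (2*H) \<phi>)^2" for \<phi>
  define a where "a = H - n + 1"
  define c where "c = 2*H - n + 1"
  define Q where "Q = (\<Sum>t<n-1. (2 - real n + 2*real t)^2)"
  have "a \<le> H" "H \<le> c" "c \<le> 2*H" using n1 nH by (auto simp: a_def c_def)
  then have blocks: "sq_incr (2*H) n = sum F {0..<a} + sum F {a..<H} + sum F {H..<c} + sum F {c..<2*H}"
    unfolding sq_incr_def F_def[symmetric]
    by (simp add: atLeast0LessThan[symmetric] sum.atLeastLessThan_concat)
  have "sum F {0..<a} = real a * (real n)^2"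
    using n1 nH by (simp add: F_def a_def tri_rising)
  moreover have "sum F {H..<c} = real a * (real n)^2"
  proof -
    have "F \<phi> = (real n)^2" if "\<phi> \<in> {H..<c}" for \<phi>
    proof -
      have "H \<le> \<phi>" "\<phi> + n \<le> 2*H" using that n1 nH by (auto simp: c_def)
      then show ?thesis by (simp add: F_def tri_falling power2_commute)
    qed
    moreover have "c - H = a" using n1 nH by (simp add: a_def c_def)
    ultimately show ?thesis by simp
  qed
  moreover have "sum F {a..<H} = Q"
  proof -
    have "F (a + t) = (2 - real n + 2*real t)^2" if "t < n - 1" for t
    proof -
      have "a + t \<le> H" "H \<le> a + t + n" "a + t + n \<le> 2*H" using that n1 nH by (auto simp: a_def)
      then have "F (a + t) = (real (2*H) - real (a + t + n) - real (a + t))^2"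
        by (simp add: F_def tri_rising tri_falling)
      then show ?thesis using n1 nH by (simp add: a_def of_nat_diff power2_eq_square algebra_simps)
    qed
    then show ?thesis using n1 nH
      by (subst sum.atLeastLessThan_shift_0) (simp add: Q_def a_def atLeast0LessThan)
  qed
  moreover have "sum F {c..<2*H} = Q"
  proof -
    have "F (c + t) = (2 - real n + 2*real t)^2" if "t < n - 1" for t
    proof -
      have "H \<le> c + t" "c + t \<le> 2*H" "2*H \<le> c + t + n" "c + t + n \<le> 3*H"
        using that n1 nH by (auto simp: c_def)
      then have "F (c + t) = (real (c + t + n) - real (2*H) - (real (2*H) - real (c + t)))^2"
        by (simp add: F_def tri_falling tri_rising_again)
      then show ?thesis using n1 nH by (simp add: c_def of_nat_diff power2_eq_square algebra_simps)
    qed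
    then show ?thesis using n1 nH
      by (subst sum.atLeastLessThan_shift_0) (simp add: Q_def c_def atLeast0LessThan)
  qed
  moreover have "Q = real (n-1)*(2 - real n)^2 + 2*(2 - real n)*real (n-1)*(real (n-1)-1)
      + 2/3*(real (n-1)-1)*real (n-1)*(2*real (n-1)-1)"
    unfolding Q_def by (rule sum_squares_arith_progression)
  ultimately show ?thesis using n1 nH unfolding blocks
    by (simp add: a_def of_nat_diff power2_eq_square power3_eq_cube field_simps)
qed

definition period :: "nat \<Rightarrow> nat" where
  "period k = 2 ^ Suc k"

definition wave_path :: "nat \<Rightarrow> nat \<Rightarrow> nat \<Rightarrow> real" where
  "wave_path k \<phi> = (\<lambda>i. tri (period k) (\<phi> + i) - tri (period k) (\<phi> + i - 1))"

definition model :: "(nat \<Rightarrow> real) pmf" where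
  "model = bind_pmf (geometric_pmf (1/2))
             (\<lambda>k. map_pmf (wave_path k) (pmf_of_set {..<period k}))"

definition phase_avg :: "nat \<Rightarrow> ((nat \<Rightarrow> real) \<Rightarrow> real) \<Rightarrow> real" where
  "phase_avg k f = (\<Sum>\<phi><period k. f (wave_path k \<phi>)) / real (period k)"

definition coord :: "nat \<Rightarrow> (nat \<Rightarrow> real) \<Rightarrow> real" where
  "coord i \<omega> = \<omega> i"

lemma period_pos: "period k > 0"
  by (simp add: period_def)

lemma set_pmf_model: "set_pmf model = {wave_path k \<phi> |k \<phi>. \<phi> < period k}"
  using period_pos by (auto simp: model_def set_bind_pmf set_pmf_geometric lessThan_empty_iff)

lemma expectation_model_sums:
  assumes bound: "\<And>k \<phi>. \<phi> < period k \<Longrightarrow> \<bar>f (wave_path k \<phi>)\<bar> \<le> B"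
  shows "(\<lambda>k. (1/2)^(k+1) * phase_avg k f) sums measure_pmf.expectation model f"
proof -
  have "(\<lambda>k. pmf (geometric_pmf (1/2)) k *
          measure_pmf.expectation (map_pmf (wave_path k) (pmf_of_set {..<period k})) f)
        sums measure_pmf.expectation model f"
    unfolding model_def
    by (rule expectation_bind_pmf_nat_sums) (use bound in \<open>auto simp: model_def[symmetric] set_pmf_model\<close>)
  moreover have "measure_pmf.expectation (map_pmf (wave_path k) (pmf_of_set {..<period k})) f
      = phase_avg k f" for k
    using period_pos[of k] by (simp add: integral_pmf_of_set phase_avg_def lessThan_empty_iff)
  ultimately show ?thesis by simp
qed

lemma wave_path_shift: "wave_path k \<phi> (i + m) = wave_path k (\<phi> + m) i"
  by (simp add: wave_path_def ac_simps)

lemma wave_path_mod: "1 \<le> i \<Longrightarrow> wave_path k (\<phi> mod period k) i = wave_path k \<phi> i"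
  unfolding wave_path_def by (metis Nat.add_diff_assoc mod_add_left_eq tri_mod)

lemma wave_path_bound: "1 \<le> i \<Longrightarrow> \<bar>wave_path k \<phi> i\<bar> \<le> 1"
  using tri_step[OF period_pos, of k "\<phi> + i - 1"] by (simp add: wave_path_def)

lemma partial_sum_wave_path:
  "partial_sum coord n (wave_path k \<phi>) = tri (period k) (\<phi> + n) - tri (period k) \<phi>"
  by (induction n) (simp_all add: partial_sum_def coord_def wave_path_def)

(* Phase averages of the wave itself are shift invariant; this makes everything centred. *)
lemma tri_sum_shift: "(\<Sum>\<phi><period k. tri (period k) (\<phi> + c)) = (\<Sum>\<phi><period k. tri (period k) \<phi>)"
  by (rule periodic_sum_shift[of "tri (period k)", OF tri_mod period_pos])

lemma phase_avg_shift:
  assumes "\<And>\<phi>. f (wave_path k (\<phi> mod period k)) = f (wave_path k \<phi>)"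
  shows "phase_avg k (\<lambda>\<omega>. f (\<lambda>i. \<omega> (i + m))) = phase_avg k f"
proof -
  have "(\<lambda>i. wave_path k \<phi> (i + m)) = wave_path k (\<phi> + m)" for \<phi>
    by (simp add: wave_path_shift)
  then show ?thesis
    using periodic_sum_shift[of "\<lambda>\<phi>. f (wave_path k \<phi>)", OF assms period_pos]
    by (simp add: phase_avg_def)
qed

lemma wave_path_product_bound:
  assumes "1 \<le> i" "1 \<le> j"
  shows "\<bar>wave_path k \<phi> i * wave_path k \<phi> j\<bar> \<le> 1"
  using wave_path_bound[OF assms(1)] wave_path_bound[OF assms(2)] by (simp add: abs_mult mult_le_one)

lemma model_centred_weakly_stationary: "centred_weakly_stationary (measure_pmf model) coord"
  unfolding centred_weakly_stationary_def
proof (intro conjI allI impI)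
  fix i :: nat assume i: "1 \<le> i"
  show "coord i \<in> borel_measurable (measure_pmf model)" by simp
  have "AE \<omega> in measure_pmf model. norm ((coord i \<omega>)^2) \<le> 1"
    using wave_path_product_bound[OF i i]
    by (auto simp: AE_measure_pmf_iff set_pmf_model coord_def power2_eq_square)
  then show "integrable (measure_pmf model) (\<lambda>\<omega>. (coord i \<omega>)^2)"
    by (intro measure_pmf.integrable_const_bound[where B=1]) simp_all
  have "phase_avg k (coord i) = 0" for k
    using tri_sum_shift[of k i] tri_sum_shift[of k "i - 1"] i
    by (simp add: phase_avg_def coord_def wave_path_def sum_subtractf)
  then show "measure_pmf.expectation model (coord i) = 0"
    using expectation_model_sums[of "coord i" 1] wave_path_bound[OF i]
    by (simp add: coord_def sums_zero_iff_shift sums_iff)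
next
  fix i j m :: nat assume i: "1 \<le> i" and j: "1 \<le> j"
  have same_avg: "phase_avg k (\<lambda>\<omega>. coord (i + m) \<omega> * coord (j + m) \<omega>)
      = phase_avg k (\<lambda>\<omega>. coord i \<omega> * coord j \<omega>)" for k
    using phase_avg_shift[where f="\<lambda>\<omega>. \<omega> i * \<omega> j" and k=k and m=m] wave_path_mod[OF i] wave_path_mod[OF j]
    by (simp add: coord_def)
  have "(\<lambda>k. (1/2)^(k+1) * phase_avg k (\<lambda>\<omega>. coord i \<omega> * coord j \<omega>))
      sums measure_pmf.expectation model (\<lambda>\<omega>. coord i \<omega> * coord j \<omega>)"
    by (rule expectation_model_sums[where B=1]) (use wave_path_product_bound[OF i j] in \<open>simp add: coord_def\<close>)
  moreover have "(\<lambda>k. (1/2)^(k+1) * phase_avg k (\<lambda>\<omega>. coord i \<omega> * coord j \<omega>))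
      sums measure_pmf.expectation model (\<lambda>\<omega>. coord (i + m) \<omega> * coord (j + m) \<omega>)"
    unfolding same_avg[symmetric]
    by (rule expectation_model_sums[where B=1])
       (use wave_path_product_bound[of "i + m" "j + m"] i j in \<open>simp add: coord_def\<close>)
  ultimately show "measure_pmf.expectation model (\<lambda>\<omega>. coord i \<omega> * coord j \<omega>)
      = measure_pmf.expectation model (\<lambda>\<omega>. coord (i + m) \<omega> * coord (j + m) \<omega>)"
    by (rule sums_unique2)
qed

definition var_weight :: "nat \<Rightarrow> nat \<Rightarrow> real" where
  "var_weight k n = (1/2)^(k+1) * (sq_incr (period k) n / real (period k))"

(* Since S_n is centred, its variance is the mixture of the increment energies. *)
lemma variance_model_sums:
  "(\<lambda>k. var_weight k n) sums measure_pmf.variance model (partial_sum coord n)"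
proof -
  have bound: "\<bar>partial_sum coord n (wave_path k \<phi>)\<bar> \<le> real n" for k \<phi>
    unfolding partial_sum_wave_path by (rule tri_increment_bound[OF period_pos])
  have "phase_avg k (partial_sum coord n) = 0" for k
    using tri_sum_shift[of k n] by (simp add: phase_avg_def partial_sum_wave_path sum_subtractf)
  then have mean: "measure_pmf.expectation model (partial_sum coord n) = 0"
    using expectation_model_sums[of "partial_sum coord n", OF bound]
    by (simp add: sums_iff)
  have "\<bar>(partial_sum coord n (wave_path k \<phi>))^2\<bar> \<le> (real n)^2" for k \<phi>
    using bound[of k \<phi>] by (simp add: abs_le_square_iff[symmetric])
  then have "(\<lambda>k. (1/2)^(k+1) * phase_avg k (\<lambda>\<omega>. (partial_sum coord n \<omega>)^2))
      sums measure_pmf.expectation model (\<lambda>\<omega>. (partial_sum coord n \<omega>)^2)"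
    by (rule expectation_model_sums)
  moreover have "(1/2)^(k+1) * phase_avg k (\<lambda>\<omega>. (partial_sum coord n \<omega>)^2) = var_weight k n" for k
    by (simp add: phase_avg_def var_weight_def sq_incr_def partial_sum_wave_path)
  ultimately show ?thesis using mean by simp
qed

lemma half_quarter_powers: "(1/2::real)^r = 1/2^r" "(1/4::real)^r = 1/(2^r)^2"
  by (simp_all add: power_one_over power2_eq_square flip: power_mult_distrib)

lemma var_weight_zero: "period k dvd n \<Longrightarrow> var_weight k n = 0"
  using sq_incr_mod[of "period k" n] by (simp add: var_weight_def sq_incr_def)

lemma var_weight_formula:
  assumes "n \<le> 2^k"
  shows "var_weight k n = (real n)^2 * (1/2)^(k+1) - ((real n)^3 - real n) / 3 * (1/4)^k"
proof (cases "n = 0")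
  case False
  define h :: real where "h = 2^k"
  have h_pos: "h > 0" by (simp add: h_def)
  have powers: "(1/2::real)^(k+1) = 1/(2*h)" "(1/4::real)^k = 1/h^2"
    by (simp_all add: h_def half_quarter_powers)
  have "sq_incr (period k) n = 2*h*(real n)^2 - 4/3*((real n)^3 - real n)"
    using sq_incr_formula[of n "2^k"] False assms by (simp add: period_def h_def)
  moreover have "real (period k) = 2*h" by (simp add: period_def h_def)
  ultimately show ?thesis
    using h_pos unfolding var_weight_def powers
    by (simp add: field_simps power2_eq_square power3_eq_cube)
qed (simp add: var_weight_def sq_incr_def)

(* Those terms are geometric in k, so the tail of the series sums in closed form. *)
lemma var_weight_tail:
  assumes "n \<le> 2^K"
  shows "(\<lambda>j. var_weight (j + K) n)
           sums ((real n)^2 * (1/2)^K - 4/9 * ((real n)^3 - real n) * (1/4)^K)"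
proof -
  have bound: "n \<le> 2^(j + K)" for j
    using assms by (meson le_add2 order_trans power_increasing_iff one_less_numeral_iff semiring_norm(76))
  have weights: "(\<lambda>j. var_weight (j + K) n)
      = (\<lambda>j. (real n)^2 * (1/2)^(K+1) * (1/2)^j - ((real n)^3 - real n) / 3 * (1/4)^K * (1/4)^j)"
    using var_weight_formula[OF bound] by (simp add: power_add mult_ac)
  have "(\<lambda>j. var_weight (j + K) n)
      sums ((real n)^2 * (1/2)^(K+1) * 2 - ((real n)^3 - real n) / 3 * (1/4)^K * (4/3))"
    unfolding weights using geometric_sums[of "1/2::real"] geometric_sums[of "1/4::real"]
    by (intro sums_diff sums_mult) simp_all
  also have "(real n)^2 * (1/2)^(K+1) * 2 - ((real n)^3 - real n) / 3 * (1/4)^K * (4/3)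
      = (real n)^2 * (1/2)^K - 4/9 * ((real n)^3 - real n) * (1/4)^K"
    by simp
  finally show ?thesis .
qed

lemma variance_model_split:
  assumes "n \<le> 2^K"
  shows "measure_pmf.variance model (partial_sum coord n)
           = (\<Sum>k<K. var_weight k n) + ((real n)^2 * (1/2)^K - 4/9 * ((real n)^3 - real n) * (1/4)^K)"
proof -
  have "(\<lambda>k. var_weight k n)
      sums ((real n)^2 * (1/2)^K - 4/9 * ((real n)^3 - real n) * (1/4)^K + (\<Sum>k<K. var_weight k n))"
    using var_weight_tail[OF assms] sums_iff_shift by blast
  from sums_unique2[OF variance_model_sums this] show ?thesis by linarith
qed

lemma period_dvd_pow2: "k < r \<Longrightarrow> period k dvd 2^r"
  unfolding period_def by (rule le_imp_power_dvd) (simp add: Suc_leI)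

lemma variance_pow2:
  "measure_pmf.variance model (partial_sum coord (2^r)) = 5/9 * 2^r + 4/9 / 2^r"
proof -
  define x :: real where "x = 2^r"
  have x_pos: "x > 0" by (simp add: x_def)
  have "(\<Sum>k<r. var_weight k (2^r)) = 0" by (simp add: var_weight_zero period_dvd_pow2)
  then have "measure_pmf.variance model (partial_sum coord (2^r))
      = x^2 * (1/x) - 4/9 * (x^3 - x) * (1/x^2)"
    using variance_model_split[of "2^r" r] by (simp add: half_quarter_powers x_def)
  also have "\<dots> = 5/9 * x + 4/9 / x"
    using x_pos by (simp add: field_simps power2_eq_square power3_eq_cube)
  finally show ?thesis by (simp add: x_def)
qed

lemma variance_three_pow2:
  "measure_pmf.variance model (partial_sum coord (3 * 2^r)) = 11/6 * 2^r + 1/2 / 2^r"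
proof -
  define x :: real where "x = 2^r"
  have x_pos: "x > 0" by (simp add: x_def)
  have low: "(\<Sum>k<r. var_weight k (3 * 2^r)) = 0"
    by (simp add: var_weight_zero period_dvd_pow2 dvd_mult)
  have "(3 * 2^r) mod period r = 2^r"
    by (simp add: period_def)
  then have "var_weight r (3 * 2^r) = var_weight r (2^r)"
    by (metis sq_incr_mod var_weight_def)
  also have "\<dots> = x^2 * (1/(2*x)) - (x^3 - x) / 3 * (1/x^2)"
    using var_weight_formula[of "2^r" r] by (simp add: half_quarter_powers x_def)
  finally have mid: "var_weight r (3 * 2^r) = x^2 * (1/(2*x)) - (x^3 - x) / 3 * (1/x^2)" .
  have "period (r + 1) - 2^r = 3 * 2^r" by (simp add: period_def)
  then have "var_weight (r + 1) (3 * 2^r) = var_weight (r + 1) (2^r)"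
    using sq_incr_reflect[of "2^r" "period (r + 1)"] period_pos[of "r + 1"]
    by (simp add: var_weight_def period_def)
  also have "\<dots> = x^2 * (1/(4*x)) - (x^3 - x) / 3 * (1/(4*x^2))"
    using var_weight_formula[of "2^r" "r + 1"] by (simp add: half_quarter_powers x_def)
  finally have high: "var_weight (r + 1) (3 * 2^r) = x^2 * (1/(4*x)) - (x^3 - x) / 3 * (1/(4*x^2))" .
  have "(3 * 2^r::nat) \<le> 2^(r + 2)" by simp
  from variance_model_split[OF this]
  have "measure_pmf.variance model (partial_sum coord (3 * 2^r))
      = x^2 * (1/(2*x)) - (x^3 - x) / 3 * (1/x^2) + (x^2 * (1/(4*x)) - (x^3 - x) / 3 * (1/(4*x^2)))
        + ((3*x)^2 * (1/(4*x)) - 4/9 * ((3*x)^3 - 3*x) * (1/(16*x^2)))"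
    using low mid high by (simp add: numeral_2_eq_2 half_quarter_powers x_def)
  also have "\<dots> = 11/6 * x + 1/2 / x"
    using x_pos by (simp add: field_simps power2_eq_square power3_eq_cube)
  finally show ?thesis by (simp add: x_def)
qed

lemma normalized_variance_pow2:
  "(\<lambda>r. measure_pmf.variance model (partial_sum coord (2^r)) / 2^r) \<longlonglongrightarrow> 5/9"
  unfolding variance_pow2 by real_asymp

lemma normalized_variance_three_pow2:
  "(\<lambda>r. measure_pmf.variance model (partial_sum coord (3 * 2^r)) / real (3 * 2^r)) \<longlonglongrightarrow> 11/18"
  unfolding variance_three_pow2 by real_asymp

lemma not_convergent_two_subsequences:
  fixes f :: "nat \<Rightarrow> 'a::t2_space"
  assumes "strict_mono g" "(f \<circ> g) \<longlonglongrightarrow> a"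
    and "strict_mono h" "(f \<circ> h) \<longlonglongrightarrow> b" and "a \<noteq> b"
  shows "\<not> convergent f"
proof
  assume "convergent f"
  then obtain L where "f \<longlonglongrightarrow> L" by (auto simp: convergent_def)
  then have "(f \<circ> g) \<longlonglongrightarrow> L" "(f \<circ> h) \<longlonglongrightarrow> L"
    using assms LIMSEQ_subseq_LIMSEQ by blast+
  then show False using assms LIMSEQ_unique by metis
qed

theorem proposition2:
  shows "\<exists>(M :: (nat \<Rightarrow> real) measure) (X :: nat \<Rightarrow> (nat \<Rightarrow> real) \<Rightarrow> real).
           prob_space M \<and> centred_weakly_stationary M X \<and>
           (\<exists>L. 0 < L \<and>
              (\<lambda>r. prob_space.variance M (partial_sum X (2^r)) / 2^r) \<longlonglongrightarrow> L) \<and>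
           \<not> convergent (\<lambda>n. prob_space.variance M (partial_sum X n) / real n)"
proof (intro exI conjI)
  show "prob_space (measure_pmf model)" by (rule prob_space_measure_pmf)
  show "centred_weakly_stationary (measure_pmf model) coord"
    by (rule model_centred_weakly_stationary)
  show "0 < (5/9::real)" by simp
  show "(\<lambda>r. measure_pmf.variance model (partial_sum coord (2^r)) / 2^r) \<longlonglongrightarrow> 5/9"
    by (rule normalized_variance_pow2)
  have "strict_mono (\<lambda>r::nat. (2::nat)^r)" "strict_mono (\<lambda>r::nat. 3 * (2::nat)^r)"
    by (auto intro: strict_monoI)
  then show "\<not> convergent (\<lambda>n. measure_pmf.variance model (partial_sum coord n) / real n)"
    using normalized_variance_pow2 normalized_variance_three_pow2
    by (intro not_convergent_two_subsequences[of "\<lambda>r. 2^r" _ "5/9" "\<lambda>r. 3 * 2^r" "11/18"])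
       (simp_all add: o_def)
qed

end
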